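(* Let $\mathcal{X}\subseteq\mathbb{R}^d$ be nonempty, closed and convex, and let $f:\mathbb{R}^d\to\mathbb{R}$ be differentiable (not necessarily convex) and $L$-smooth on an open set containing $\mathcal{X}$; assume the constrained minimum $f_\star=\min_{x\in\mathcal{X}}f(x)$ is attained. For $\gamma>0$ define $G_\gamma(x):=\frac1\gamma\big(x-\Pi_{\mathcal{X}}(x-\gamma\nabla f(x))\big)$, where $\Pi_{\mathcal{X}}$ is the Euclidean projection onto $\mathcal{X}$. Suppose there are $\mu>0$ and $\gamma\in(0,1/L]$ such that $\frac12\|G_\gamma(x)\|^2\ge\mu(f(x)-f_\star)$ for all $x\in\mathcal{X}$. Let $x_0\in\mathcal{X}$ and $x_{k+1}\in\operatorname{arg\,min}_{z\in\mathcal{X}\cap\mathcal{B}(x_k,t_k)}\langle\nabla f(x_k),z\rangle$ with $t_k:=\gamma\|G_\gamma(x_k)\|$. Then for every $k\ge0$, $f(x_{k+1})\le f(x_k)-\frac\gamma2\|G_\gamma(x_k)\|^2$, and consequently $f(x_k)-f_\star\le(1-\gamma\mu)^k(f(x_0)-f_\star)$ for all $k\ge0$. In particular, for $\gamma=1/L$, $f(x_k)-f_\star\le(1-\mu/L)^k(f(x_0)-f_\star)$.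
   Context: $\|\cdot\|$ is the Euclidean norm, $\mathcal{B}(x,t):=\{y:\|y-x\|\le t\}$; $L$-smooth means $\nabla f$ is $L$-Lipschitz. *)

theory Defs
  imports "HOL-Analysis.Analysis"
begin

definition grad_map :: "'a::euclidean_space set \<Rightarrow> ('a \<Rightarrow> 'a) \<Rightarrow> real \<Rightarrow> 'a \<Rightarrow> 'a" where
  "grad_map X g \<gamma> x = (1 / \<gamma>) *\<^sub>R (x - closest_point X (x - \<gamma> *\<^sub>R g x))"

end

theory Submission
  imports Defs
begin

text \<open>With \<open>G = grad_map X g \<gamma> x\<close>, the projected-gradient point \<open>x - \<gamma> G\<close> is feasible for the
  linear minimisation over \<open>X \<inter> cball x (\<gamma> \<parallel>G\<parallel>)\<close>, so the step decreases the linear model by at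
  least \<open>\<gamma> \<langle>g x, G\<rangle> \<ge> \<gamma> \<parallel>G\<parallel>\<^sup>2\<close> (obtuse-angle property of the projection). The step has length
  at most \<open>\<gamma> \<parallel>G\<parallel>\<close>, so with \<open>\<gamma> L \<le> 1\<close> the quadratic term of the descent lemma costs at most
  half of that. The PL inequality for the gradient mapping turns the resulting decrease
  \<open>(\<gamma>/2) \<parallel>G\<parallel>\<^sup>2\<close> into the contraction factor \<open>1 - \<gamma> \<mu>\<close>.\<close>

lemma lipschitz_gradient_descent_lemma:
  fixes f :: "'a::euclidean_space \<Rightarrow> real" and g :: "'a \<Rightarrow> 'a"
  assumes grad: "\<And>y. y \<in> S \<Longrightarrow> (f has_derivative (\<lambda>h. g y \<bullet> h)) (at y)"
    and smooth: "\<And>y z. y \<in> S \<Longrightarrow> z \<in> S \<Longrightarrow> norm (g y - g z) \<le> L * norm (y - z)"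
    and S: "convex S" and x: "x \<in> S" and y: "y \<in> S"
  shows "f y \<le> f x + g x \<bullet> (y - x) + L / 2 * (norm (y - x))\<^sup>2"
proof -
  define d where "d = y - x"
  define \<phi> where "\<phi> t = f (x + t *\<^sub>R d) - t * (g x \<bullet> d) - L / 2 * t\<^sup>2 * (norm d)\<^sup>2" for t
  have "\<phi> 1 \<le> \<phi> 0"
  proof (rule DERIV_nonpos_imp_nonincreasing[of 0 1 \<phi>])
    fix t :: real assume t: "0 \<le> t" "t \<le> 1"
    have xt: "x + t *\<^sub>R d \<in> S"
      using convexD_alt[OF S x y, of t] t unfolding d_def by (simp add: algebra_simps)
    have "((\<lambda>t. x + t *\<^sub>R d) has_derivative (\<lambda>h. h *\<^sub>R d)) (at t)"
      by (auto intro!: derivative_eq_intros)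
    from has_derivative_compose[OF this grad[OF xt]]
    have "((\<lambda>t. f (x + t *\<^sub>R d)) has_derivative (\<lambda>h. g (x + t *\<^sub>R d) \<bullet> (h *\<^sub>R d))) (at t)"
      by (simp add: o_def)
    then have "((\<lambda>t. f (x + t *\<^sub>R d)) has_real_derivative g (x + t *\<^sub>R d) \<bullet> d) (at t)"
      by (rule has_derivative_imp_has_field_derivative) simp
    then have "DERIV \<phi> t :> (g (x + t *\<^sub>R d) - g x) \<bullet> d - L * t * (norm d)\<^sup>2"
      unfolding \<phi>_def by (auto intro!: derivative_eq_intros simp: inner_diff_left)
    moreover have "(g (x + t *\<^sub>R d) - g x) \<bullet> d \<le> L * t * (norm d)\<^sup>2"
    proof -
      have "(g (x + t *\<^sub>R d) - g x) \<bullet> d \<le> norm (g (x + t *\<^sub>R d) - g x) * norm d"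
        by (rule norm_cauchy_schwarz)
      also have "\<dots> \<le> L * norm (t *\<^sub>R d) * norm d"
        using smooth[OF xt x] by (auto intro!: mult_right_mono)
      also have "\<dots> = L * t * (norm d)\<^sup>2"
        using t by (simp add: power2_eq_square)
      finally show ?thesis .
    qed
    ultimately show "\<exists>D. DERIV \<phi> t :> D \<and> D \<le> 0"
      by force
  qed simp
  then show ?thesis
    unfolding \<phi>_def d_def by simp
qed

lemma closest_point_grad_map:
  assumes "\<gamma> \<noteq> 0"
  shows "closest_point X (x - \<gamma> *\<^sub>R g x) = x - \<gamma> *\<^sub>R grad_map X g \<gamma> x"
  using assms by (simp add: grad_map_def)

lemma grad_map_norm_sq_le_inner:
  assumes "convex X" "closed X" "x \<in> X" "\<gamma> > 0"
  shows "(norm (grad_map X g \<gamma> x))\<^sup>2 \<le> g x \<bullet> grad_map X g \<gamma> x"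
proof -
  define G where "G = grad_map X g \<gamma> x"
  have "(x - \<gamma> *\<^sub>R g x - (x - \<gamma> *\<^sub>R G)) \<bullet> (x - (x - \<gamma> *\<^sub>R G)) \<le> 0"
    using closest_point_dot[OF assms(1-3), of "x - \<gamma> *\<^sub>R g x"] assms(4)
    by (simp add: closest_point_grad_map G_def)
  then have "\<gamma>\<^sup>2 * (G \<bullet> G - g x \<bullet> G) \<le> 0"
    by (simp add: inner_diff_left power2_eq_square algebra_simps)
  then show ?thesis
    using assms(4) by (simp add: G_def mult_le_0_iff power2_norm_eq_inner)
qed

lemma ball_linear_minimiser_decrease:
  fixes f :: "'a::euclidean_space \<Rightarrow> real" and g :: "'a \<Rightarrow> 'a"
  assumes X: "convex X" "closed X" and x: "x \<in> X"
    and grad: "\<And>y. y \<in> X \<Longrightarrow> (f has_derivative (\<lambda>h. g y \<bullet> h)) (at y)"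
    and smooth: "\<And>y z. y \<in> X \<Longrightarrow> z \<in> X \<Longrightarrow> norm (g y - g z) \<le> L * norm (y - z)"
    and L: "L \<ge> 0" and \<gamma>: "\<gamma> > 0" "\<gamma> * L \<le> 1"
    and feas: "x' \<in> X \<inter> cball x (\<gamma> * norm (grad_map X g \<gamma> x))"
    and min: "\<And>z. z \<in> X \<inter> cball x (\<gamma> * norm (grad_map X g \<gamma> x)) \<Longrightarrow> g x \<bullet> x' \<le> g x \<bullet> z"
  shows "f x' \<le> f x - (\<gamma> / 2) * (norm (grad_map X g \<gamma> x))\<^sup>2"
proof -
  define G where "G = grad_map X g \<gamma> x"
  have "x - \<gamma> *\<^sub>R G \<in> X"
    using closest_point_in_set[OF X(2), of "x - \<gamma> *\<^sub>R g x"] x \<gamma>(1)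
    by (auto simp: closest_point_grad_map G_def)
  then have "g x \<bullet> x' \<le> g x \<bullet> (x - \<gamma> *\<^sub>R G)"
    using \<gamma>(1) by (intro min) (simp add: G_def dist_norm)
  then have linear: "g x \<bullet> (x' - x) \<le> - \<gamma> * (norm G)\<^sup>2"
    using mult_left_mono[OF grad_map_norm_sq_le_inner[OF X x \<gamma>(1)] less_imp_le[OF \<gamma>(1)], of g]
    by (simp add: G_def inner_diff_right)
  have "(norm (x' - x))\<^sup>2 \<le> (\<gamma> * norm G)\<^sup>2"
    using feas by (simp add: G_def dist_norm norm_minus_commute power_mono)
  then have "L / 2 * (norm (x' - x))\<^sup>2 \<le> (\<gamma> * L) * (\<gamma> / 2 * (norm G)\<^sup>2)"
    using L by (simp add: mult_left_mono power_mult_distrib power2_eq_square algebra_simps)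
  also have "\<dots> \<le> \<gamma> / 2 * (norm G)\<^sup>2"
    using \<gamma> L by (intro mult_left_le_one_le) auto
  finally have quadratic: "L / 2 * (norm (x' - x))\<^sup>2 \<le> \<gamma> / 2 * (norm G)\<^sup>2" .
  have "f x' \<le> f x + g x \<bullet> (x' - x) + L / 2 * (norm (x' - x))\<^sup>2"
    using feas by (intro lipschitz_gradient_descent_lemma[OF grad smooth X(1) x]) auto
  with linear quadratic show ?thesis
    unfolding G_def by linarith
qed

lemma linear_rate_from_contraction:
  fixes a :: "nat \<Rightarrow> real"
  assumes nonneg: "\<And>k. a k \<ge> 0" and contr: "\<And>k. a (Suc k) \<le> c * a k"
  shows "a k \<le> c ^ k * a 0"
proof (cases "c \<ge> 0")
  case True
  show ?thesis
  proof (induction k)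
    case (Suc k)
    have "a (Suc k) \<le> c * a k" by (rule contr)
    also have "\<dots> \<le> c * (c ^ k * a 0)" using Suc True by (rule mult_left_mono)
    finally show ?case by simp
  qed simp
next
  case False
  have "c * a k \<le> 0" for k
    using False nonneg[of k] by (simp add: mult_nonpos_nonneg)
  then have "a (Suc k) = 0" for k
    using contr[of k] nonneg[of "Suc k"] by (meson antisym order_trans)
  moreover have "0 \<le> c * a 0"
    using contr[of 0] nonneg[of 1] by simp
  then have "a 0 = 0"
    using False nonneg[of 0] by (simp add: zero_le_mult_iff)
  ultimately show ?thesis
    by (cases k) simp_all
qed

theorem theorem8:
  fixes X U :: "'a::euclidean_space set"
    and f :: "'a \<Rightarrow> real" and g :: "'a \<Rightarrow> 'a"
    and L \<mu> \<gamma> :: real and xstar :: 'a and x :: "nat \<Rightarrow> 'a"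
  assumes X_ne: "X \<noteq> {}" and X_closed: "closed X" and X_convex: "convex X"
    and grad: "\<And>y. (f has_derivative (\<lambda>h. g y \<bullet> h)) (at y)"
    and U_open: "open U" and XU: "X \<subseteq> U"
    and L_pos: "L > 0"
    and smooth: "\<And>y z. y \<in> U \<Longrightarrow> z \<in> U \<Longrightarrow> norm (g y - g z) \<le> L * norm (y - z)"
    and xstar_in: "xstar \<in> X" and xstar_min: "\<And>y. y \<in> X \<Longrightarrow> f xstar \<le> f y"
    and mu_pos: "\<mu> > 0"
    and gamma_pos: "\<gamma> > 0" and gamma_le: "\<gamma> \<le> 1 / L"
    and PL: "\<And>y. y \<in> X \<Longrightarrow> (1/2) * (norm (grad_map X g \<gamma> y))\<^sup>2 \<ge> \<mu> * (f y - f xstar)"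
    and x0: "x 0 \<in> X"
    and step_feas: "\<And>k. x (Suc k) \<in> X \<inter> cball (x k) (\<gamma> * norm (grad_map X g \<gamma> (x k)))"
    and step_min: "\<And>k z. z \<in> X \<inter> cball (x k) (\<gamma> * norm (grad_map X g \<gamma> (x k))) \<Longrightarrow>
                      g (x k) \<bullet> x (Suc k) \<le> g (x k) \<bullet> z"
  shows "(\<forall>k. f (x (Suc k)) \<le> f (x k) - (\<gamma> / 2) * (norm (grad_map X g \<gamma> (x k)))\<^sup>2)
       \<and> (\<forall>k. f (x k) - f xstar \<le> (1 - \<gamma> * \<mu>) ^ k * (f (x 0) - f xstar))
       \<and> (\<gamma> = 1 / L \<longrightarrow> (\<forall>k. f (x k) - f xstar \<le> (1 - \<mu> / L) ^ k * (f (x 0) - f xstar)))"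
proof -
  have x_in: "x k \<in> X" for k
    using x0 step_feas by (cases k) auto
  have "\<gamma> * L \<le> 1"
    using gamma_le L_pos by (simp add: field_simps)
  moreover have "y \<in> X \<Longrightarrow> z \<in> X \<Longrightarrow> norm (g y - g z) \<le> L * norm (y - z)" for y z
    using XU by (intro smooth) auto
  ultimately have decrease:
    "f (x (Suc k)) \<le> f (x k) - (\<gamma> / 2) * (norm (grad_map X g \<gamma> (x k)))\<^sup>2" for k
    using ball_linear_minimiser_decrease[OF X_convex X_closed x_in grad, of L \<gamma>]
      L_pos gamma_pos step_feas step_min by simp
  have "f (x (Suc k)) - f xstar \<le> (1 - \<gamma> * \<mu>) * (f (x k) - f xstar)" for k
    using decrease[of k] mult_left_mono[OF PL[OF x_in[of k]], of \<gamma>] gamma_pos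
    by (simp add: algebra_simps)
  then have rate: "f (x k) - f xstar \<le> (1 - \<gamma> * \<mu>) ^ k * (f (x 0) - f xstar)" for k
    using xstar_min x_in by (intro linear_rate_from_contraction) auto
  show ?thesis
    using decrease rate by (auto simp: mult.commute[of _ \<mu>])
qed

end
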